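(* Let $M$ be a compact Polish metric space, let $\bar a=(a_0,\dots,a_{p-1})$ and $\bar b=(b_0,\dots,b_{p-1})$ be tuples from $M$, and let $(A_n:n\in\omega)$ be a sequence of finite subsets of $M$ with $A_n\subseteq A_{n+1}$ and $\bigcup_{z\in A_n}B_{2^{-n}}(z)=M$ for all $n$. Suppose $(\varphi_n:n\in\omega)$ is a compact approximation system for $M,\bar a,\bar b$ with respect to $(A_n:n\in\omega)$. Then there is a bijective isometry $\Phi:M\to M$ with $\Phi(a_i)=b_i$ for all $i<p$.
   Context: $B_r(z)$ denotes the open ball of radius $r$ about $z$. A compact approximation system for $M,\bar a,\bar b$ with respect to $(A_n)$ is a sequence $(\varphi_n:n\in\omega)$ such that for every $n$: (i) $\varphi_n:A_n\to A_n$; (ii) for all $i<p$ and $z\in A_n$, $|d(a_i,z)-d(b_i,\varphi_n(z))|<2^{-n}$; (iii) for all $m\le n$, $y\in A_m$, $z\in A_n$, $|d(y,z)-d(\varphi_m(y),\varphi_n(z))|<2^{-m}+2^{-n}$; (iv) $\bigcup_{z\in A_n}B_{2^{-(n-1)}}(\varphi_n(z))=M$. *)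

theory Defs
  imports "HOL-Analysis.Analysis"
begin

text \<open>The space M is a subset of a metric space type; open balls are taken
  relative to M, so "the union of balls equals M" is rendered as
  "M is contained in the union of (ambient) balls", the centres lying in M.\<close>
definition compact_approx_system ::
  "'a::metric_space set \<Rightarrow> nat \<Rightarrow> (nat \<Rightarrow> 'a) \<Rightarrow> (nat \<Rightarrow> 'a) \<Rightarrow> (nat \<Rightarrow> 'a set)
   \<Rightarrow> (nat \<Rightarrow> 'a \<Rightarrow> 'a) \<Rightarrow> bool" where
  "compact_approx_system M p a b A \<phi> \<longleftrightarrow>
     (\<forall>n. \<phi> n ` A n \<subseteq> A n) \<and>
     (\<forall>n. \<forall>i<p. \<forall>z\<in>A n. \<bar>dist (a i) z - dist (b i) (\<phi> n z)\<bar> < (1/2) ^ n) \<and>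
     (\<forall>n m. m \<le> n \<longrightarrow> (\<forall>y\<in>A m. \<forall>z\<in>A n.
        \<bar>dist y z - dist (\<phi> m y) (\<phi> n z)\<bar> < (1/2) ^ m + (1/2) ^ n)) \<and>
     (\<forall>n. M \<subseteq> (\<Union>z\<in>A n. ball (\<phi> n z) (2 powr (1 - real n))))"

end

theory Submission
  imports Defs
begin

text \<open>For \<open>x \<in> M\<close> pick \<open>z\<^sub>n \<in> A\<^sub>n\<close> with \<open>z\<^sub>n \<rightarrow> x\<close>. By (iii) the points \<open>\<phi>\<^sub>n(z\<^sub>n)\<close>
  form a Cauchy sequence, and \<open>\<Phi>(x)\<close> is its limit. Since the \<open>\<phi>\<^sub>n\<close> distort distances by
  errors tending to 0, limits of sequences \<open>\<phi>\<^sub>n(u\<^sub>n)\<close> and \<open>\<phi>\<^sub>n(v\<^sub>n)\<close> lie at the same distance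
  as the limits of \<open>u\<^sub>n\<close> and \<open>v\<^sub>n\<close>. This one fact shows that \<open>\<Phi>\<close> is an isometry, that
  \<open>\<Phi>(a\<^sub>i) = b\<^sub>i\<close> by (ii), and, applied to a convergent subsequence of points \<open>u\<^sub>n \<in> A\<^sub>n\<close> with
  \<open>\<phi>\<^sub>n(u\<^sub>n) \<rightarrow> w\<close> given by (iv) and compactness, that every \<open>w \<in> M\<close> is a value of \<open>\<Phi>\<close>.\<close>

lemma tendsto_if_dist_le:
  assumes "\<And>k. dist (f k) L \<le> e k" and "(e \<longlongrightarrow> 0) F"
  shows "(f \<longlongrightarrow> L) F"
proof (rule metric_tendsto_imp_tendsto[OF assms(2)])
  have "dist (f k) L \<le> dist (e k) 0" for k
    using order_trans[OF assms(1) abs_ge_self] by (simp add: dist_real_def)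
  then show "\<forall>\<^sub>F k in F. dist (f k) L \<le> dist (e k) 0"
    by simp
qed

lemma Cauchy_if_dist_le_add:
  fixes X :: "nat \<Rightarrow> 'a::metric_space"
  assumes "\<And>m n. dist (X m) (X n) \<le> e m + e n" and "e \<longlonglongrightarrow> 0"
  shows "Cauchy X"
proof (rule metric_CauchyI)
  fix r :: real assume "0 < r"
  then have "\<forall>\<^sub>F n in sequentially. e n < r / 2"
    using assms(2) by (intro order_tendstoD(2)) auto
  then obtain N where N: "\<And>n. n \<ge> N \<Longrightarrow> e n < r / 2"
    by (auto simp: eventually_sequentially)
  show "\<exists>N. \<forall>m\<ge>N. \<forall>n\<ge>N. dist (X m) (X n) < r"
  proof (intro exI allI impI)
    fix m n assume "m \<ge> N" "n \<ge> N"
    then show "dist (X m) (X n) < r"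
      using assms(1)[of m n] N[of m] N[of n] by linarith
  qed
qed

lemma dist_limits_eq:
  assumes "F \<noteq> bot"
    and "(x \<longlongrightarrow> x0) F" "(y \<longlongrightarrow> y0) F" "(u \<longlongrightarrow> u0) F" "(v \<longlongrightarrow> v0) F"
    and "\<And>k. \<bar>dist (x k) (y k) - dist (u k) (v k)\<bar> \<le> e k" and "(e \<longlongrightarrow> 0) F"
  shows "dist u0 v0 = dist x0 y0"
proof -
  have "((\<lambda>k. dist (x k) (y k) - dist (u k) (v k)) \<longlongrightarrow> dist x0 y0 - dist u0 v0) F"
    using assms(2-5) by (intro tendsto_intros)
  moreover have "((\<lambda>k. dist (x k) (y k) - dist (u k) (v k)) \<longlongrightarrow> 0) F"
    by (rule tendsto_if_dist_le[OF _ assms(7)]) (use assms(6) in \<open>simp add: dist_real_def\<close>)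
  ultimately have "dist x0 y0 - dist u0 v0 = 0"
    by (rule tendsto_unique[OF assms(1)])
  then show ?thesis
    by simp
qed

locale approx_isometry_system =
  fixes M :: "'a::metric_space set" and A :: "nat \<Rightarrow> 'a set"
    and \<phi> :: "nat \<Rightarrow> 'a \<Rightarrow> 'a" and \<epsilon> :: "nat \<Rightarrow> real"
  assumes complete: "complete M"
    and A_dense: "x \<in> M \<Longrightarrow> \<exists>z\<in>A n. dist x z \<le> \<epsilon> n"
    and \<phi>_in_M: "z \<in> A n \<Longrightarrow> \<phi> n z \<in> M"
    and \<phi>_dist: "y \<in> A m \<Longrightarrow> z \<in> A n \<Longrightarrow> \<bar>dist y z - dist (\<phi> m y) (\<phi> n z)\<bar> \<le> \<epsilon> m + \<epsilon> n"
    and \<epsilon>_tendsto: "\<epsilon> \<longlonglongrightarrow> 0"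
begin

lemma twice_\<epsilon>_tendsto: "(\<lambda>n. 2 * \<epsilon> n) \<longlonglongrightarrow> 0"
  using tendsto_mult_right_zero[OF \<epsilon>_tendsto] .

definition approx_point :: "nat \<Rightarrow> 'a \<Rightarrow> 'a" where
  "approx_point n x = (SOME z. z \<in> A n \<and> dist x z \<le> \<epsilon> n)"

lemma approx_point:
  assumes "x \<in> M"
  shows "approx_point n x \<in> A n" and "dist x (approx_point n x) \<le> \<epsilon> n"
proof -
  have "\<exists>z. z \<in> A n \<and> dist x z \<le> \<epsilon> n"
    using A_dense[OF assms] by blast
  then have "approx_point n x \<in> A n \<and> dist x (approx_point n x) \<le> \<epsilon> n"
    unfolding approx_point_def by (rule someI_ex)
  then show "approx_point n x \<in> A n" and "dist x (approx_point n x) \<le> \<epsilon> n"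
    by auto
qed

lemma approx_point_tendsto: "x \<in> M \<Longrightarrow> (\<lambda>n. approx_point n x) \<longlonglongrightarrow> x"
  by (rule tendsto_if_dist_le[OF _ \<epsilon>_tendsto]) (simp add: approx_point dist_commute)

lemma Cauchy_image_approx_point:
  assumes "x \<in> M"
  shows "Cauchy (\<lambda>n. \<phi> n (approx_point n x))"
proof (rule Cauchy_if_dist_le_add[OF _ twice_\<epsilon>_tendsto])
  fix m n
  have "dist (approx_point m x) (approx_point n x) \<le> \<epsilon> m + \<epsilon> n"
    using dist_triangle3[of "approx_point m x" "approx_point n x" x]
      approx_point(2)[OF assms, of m] approx_point(2)[OF assms, of n] by linarith
  then show "dist (\<phi> m (approx_point m x)) (\<phi> n (approx_point n x)) \<le> 2 * \<epsilon> m + 2 * \<epsilon> n"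
    using \<phi>_dist[OF approx_point(1)[OF assms, of m] approx_point(1)[OF assms, of n]] by linarith
qed

definition limit_map :: "'a \<Rightarrow> 'a" where
  "limit_map x = lim (\<lambda>n. \<phi> n (approx_point n x))"

lemma limit_map:
  assumes "x \<in> M"
  shows "limit_map x \<in> M" and "(\<lambda>n. \<phi> n (approx_point n x)) \<longlonglongrightarrow> limit_map x"
proof -
  have "\<forall>n. \<phi> n (approx_point n x) \<in> M"
    using \<phi>_in_M approx_point(1)[OF assms] by blast
  then obtain l where "l \<in> M" and l: "(\<lambda>n. \<phi> n (approx_point n x)) \<longlonglongrightarrow> l"
    by (rule completeE[OF complete _ Cauchy_image_approx_point[OF assms]])
  moreover from l have "limit_map x = l"
    unfolding limit_map_def by (rule limI)
  ultimately show "limit_map x \<in> M" and "(\<lambda>n. \<phi> n (approx_point n x)) \<longlonglongrightarrow> limit_map x"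
    by simp_all
qed

lemma dist_limit_map:
  assumes "x \<in> M" and "y \<in> M"
  shows "dist (limit_map x) (limit_map y) = dist x y"
proof (rule dist_limits_eq[OF _ approx_point_tendsto[OF assms(1)] approx_point_tendsto[OF assms(2)]
      limit_map(2)[OF assms(1)] limit_map(2)[OF assms(2)] _ twice_\<epsilon>_tendsto])
  fix k
  show "\<bar>dist (approx_point k x) (approx_point k y)
      - dist (\<phi> k (approx_point k x)) (\<phi> k (approx_point k y))\<bar> \<le> 2 * \<epsilon> k"
    using \<phi>_dist[OF approx_point(1)[OF assms(1), of k] approx_point(1)[OF assms(2), of k]] by simp
qed simp

lemma limit_map_eqI:
  assumes "x \<in> M" and "\<And>n z. z \<in> A n \<Longrightarrow> \<bar>dist x z - dist y (\<phi> n z)\<bar> \<le> \<epsilon> n"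
  shows "limit_map x = y"
proof -
  have "dist y (limit_map x) = dist x x"
    by (rule dist_limits_eq[OF _ tendsto_const approx_point_tendsto[OF assms(1)]
          tendsto_const limit_map(2)[OF assms(1)] _ \<epsilon>_tendsto])
      (simp_all add: assms(2) approx_point(1)[OF assms(1)])
  then show ?thesis
    by simp
qed

lemma limit_map_image:
  assumes "compact M" and "\<And>n. A n \<subseteq> M"
    and \<phi>_dense: "\<And>n w. w \<in> M \<Longrightarrow> \<exists>z\<in>A n. dist (\<phi> n z) w \<le> \<epsilon> n"
  shows "limit_map ` M = M"
proof
  show "limit_map ` M \<subseteq> M"
    using limit_map(1) by blast
  show "M \<subseteq> limit_map ` M"
  proof
    fix w assume "w \<in> M"
    then obtain v where v: "\<And>n. v n \<in> A n" "\<And>n. dist (\<phi> n (v n)) w \<le> \<epsilon> n"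
      using \<phi>_dense by metis
    then have "\<forall>n. v n \<in> M"
      using assms(2) by blast
    then obtain x r where "x \<in> M" and r: "strict_mono r" and "(v \<circ> r) \<longlonglongrightarrow> x"
      using compact_imp_seq_compact[OF assms(1)] unfolding seq_compact_def by blast
    have subseq: "(\<lambda>k. g (r k)) \<longlonglongrightarrow> l" if "g \<longlonglongrightarrow> l" for g :: "nat \<Rightarrow> 'b::topological_space" and l
      using LIMSEQ_subseq_LIMSEQ[OF that r] by (simp add: o_def)
    have "(\<lambda>k. v (r k)) \<longlonglongrightarrow> x"
      using \<open>(v \<circ> r) \<longlonglongrightarrow> x\<close> by (simp add: o_def)
    moreover have "(\<lambda>k. \<phi> (r k) (v (r k))) \<longlonglongrightarrow> w"
      by (rule tendsto_if_dist_le[OF _ subseq[OF \<epsilon>_tendsto]]) (rule v(2))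
    moreover have "\<bar>dist (v (r k)) (approx_point (r k) x)
        - dist (\<phi> (r k) (v (r k))) (\<phi> (r k) (approx_point (r k) x))\<bar> \<le> 2 * \<epsilon> (r k)" for k
      using \<phi>_dist[OF v(1)[of "r k"] approx_point(1)[OF \<open>x \<in> M\<close>, of "r k"]] by simp
    ultimately have "dist w (limit_map x) = dist x x"
      by (intro dist_limits_eq[OF _ _ subseq[OF approx_point_tendsto[OF \<open>x \<in> M\<close>]]
            _ subseq[OF limit_map(2)[OF \<open>x \<in> M\<close>]] _ subseq[OF twice_\<epsilon>_tendsto]]) simp_all
    then show "w \<in> limit_map ` M"
      using \<open>x \<in> M\<close> by simp
  qed
qed

lemma bij_betw_limit_map:
  assumes "compact M" and "\<And>n. A n \<subseteq> M"
    and "\<And>n w. w \<in> M \<Longrightarrow> \<exists>z\<in>A n. dist (\<phi> n z) w \<le> \<epsilon> n"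
  shows "bij_betw limit_map M M"
proof (rule bij_betw_imageI)
  show "inj_on limit_map M"
    by (rule inj_onI) (metis dist_limit_map dist_eq_0_iff)
  show "limit_map ` M = M"
    using assms by (rule limit_map_image)
qed

end

lemma compact_approx_systemD:
  assumes "compact_approx_system M p a b A \<phi>"
  shows "z \<in> A n \<Longrightarrow> \<phi> n z \<in> A n"
    and "i < p \<Longrightarrow> z \<in> A n \<Longrightarrow> \<bar>dist (a i) z - dist (b i) (\<phi> n z)\<bar> < (1/2) ^ n"
    and "m \<le> n \<Longrightarrow> y \<in> A m \<Longrightarrow> z \<in> A n \<Longrightarrow>
      \<bar>dist y z - dist (\<phi> m y) (\<phi> n z)\<bar> < (1/2) ^ m + (1/2) ^ n"
    and "w \<in> M \<Longrightarrow> \<exists>z\<in>A n. dist (\<phi> n z) w < 2 * (1/2) ^ n"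
proof -
  have image: "\<forall>n. \<phi> n ` A n \<subseteq> A n"
    and tuple: "\<forall>n. \<forall>i<p. \<forall>z\<in>A n. \<bar>dist (a i) z - dist (b i) (\<phi> n z)\<bar> < (1/2) ^ n"
    and pairs: "\<forall>n m. m \<le> n \<longrightarrow> (\<forall>y\<in>A m. \<forall>z\<in>A n.
        \<bar>dist y z - dist (\<phi> m y) (\<phi> n z)\<bar> < (1/2) ^ m + (1/2) ^ n)"
    and cover: "\<forall>n. M \<subseteq> (\<Union>z\<in>A n. ball (\<phi> n z) (2 powr (1 - real n)))"
    using assms unfolding compact_approx_system_def by simp_all
  show "z \<in> A n \<Longrightarrow> \<phi> n z \<in> A n"
    using image by blast
  show "i < p \<Longrightarrow> z \<in> A n \<Longrightarrow> \<bar>dist (a i) z - dist (b i) (\<phi> n z)\<bar> < (1/2) ^ n"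
    using tuple by blast
  show "m \<le> n \<Longrightarrow> y \<in> A m \<Longrightarrow> z \<in> A n \<Longrightarrow>
      \<bar>dist y z - dist (\<phi> m y) (\<phi> n z)\<bar> < (1/2) ^ m + (1/2) ^ n"
    using pairs by blast
  have "(2::real) powr (1 - real n) = 2 * (1/2) ^ n"
    by (simp add: powr_diff powr_realpow power_one_over)
  then show "w \<in> M \<Longrightarrow> \<exists>z\<in>A n. dist (\<phi> n z) w < 2 * (1/2) ^ n"
    using subsetD[OF cover[rule_format, of n], of w] by auto
qed

lemma approx_isometry_system_if_compact_approx_system:
  assumes "compact M" and A_subset: "\<And>n. A n \<subseteq> M"
    and A_dense: "\<And>n. M \<subseteq> (\<Union>z\<in>A n. ball z ((1/2) ^ n))"
    and sys: "compact_approx_system M p a b A \<phi>"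
  shows "approx_isometry_system M A \<phi> (\<lambda>n. 2 * (1/2) ^ n)"
proof
  show "complete M"
    using \<open>compact M\<close> by (rule compact_imp_complete)
  show "\<exists>z\<in>A n. dist x z \<le> 2 * (1/2) ^ n" if "x \<in> M" for x n
  proof -
    obtain z where "z \<in> A n" and "x \<in> ball z ((1/2) ^ n)"
      using subsetD[OF A_dense \<open>x \<in> M\<close>] by (rule UN_E)
    moreover have "(1/2::real) ^ n \<le> 2 * (1/2) ^ n"
      by simp
    ultimately show ?thesis
      by (metis mem_ball dist_commute less_imp_le order_trans)
  qed
  show "\<phi> n z \<in> M" if "z \<in> A n" for n z
    by (rule subsetD[OF A_subset compact_approx_systemD(1)[OF sys that]])
  show "\<bar>dist y z - dist (\<phi> m y) (\<phi> n z)\<bar> \<le> 2 * (1/2) ^ m + 2 * (1/2) ^ n"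
    if "y \<in> A m" and "z \<in> A n" for y z m n
  proof (cases "m \<le> n")
    case True
    then show ?thesis
      using compact_approx_systemD(3)[OF sys True that] by simp
  next
    case False
    then have "n \<le> m"
      by simp
    from compact_approx_systemD(3)[OF sys this that(2,1)] show ?thesis
      by (simp add: dist_commute)
  qed
  show "(\<lambda>n. 2 * (1/2::real) ^ n) \<longlonglongrightarrow> 0"
    by (intro tendsto_mult_right_zero LIMSEQ_realpow_zero) simp_all
qed

theorem lemma3p2:
  fixes M :: "'a::metric_space set" and p :: nat
    and a b :: "nat \<Rightarrow> 'a" and A :: "nat \<Rightarrow> 'a set" and \<phi> :: "nat \<Rightarrow> 'a \<Rightarrow> 'a"
  assumes "compact M"
    and "\<forall>i<p. a i \<in> M" and "\<forall>i<p. b i \<in> M"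
    and "\<forall>n. finite (A n) \<and> A n \<subseteq> M"
    and "\<forall>n. A n \<subseteq> A (Suc n)"
    and "\<forall>n. M \<subseteq> (\<Union>z\<in>A n. ball z ((1/2) ^ n))"
    and "compact_approx_system M p a b A \<phi>"
  shows "\<exists>\<Phi>. bij_betw \<Phi> M M \<and> (\<forall>x\<in>M. \<forall>y\<in>M. dist (\<Phi> x) (\<Phi> y) = dist x y)
             \<and> (\<forall>i<p. \<Phi> (a i) = b i)"
proof -
  have A_subset: "\<And>n. A n \<subseteq> M"
    using assms(4) by blast
  interpret approx_isometry_system M A \<phi> "\<lambda>n. 2 * (1/2) ^ n"
    by (rule approx_isometry_system_if_compact_approx_system[OF assms(1) A_subset _ assms(7)])
      (use assms(6) in blast)
  have "bij_betw limit_map M M"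
    by (rule bij_betw_limit_map[OF assms(1) A_subset])
      (use compact_approx_systemD(4)[OF assms(7)] in \<open>meson less_imp_le\<close>)
  moreover have "limit_map (a i) = b i" if "i < p" for i
  proof (rule limit_map_eqI)
    show "a i \<in> M"
      using assms(2) \<open>i < p\<close> by blast
    show "\<bar>dist (a i) z - dist (b i) (\<phi> n z)\<bar> \<le> 2 * (1/2) ^ n" if "z \<in> A n" for n z
      using compact_approx_systemD(2)[OF assms(7) \<open>i < p\<close> that] by simp
  qed
  ultimately show ?thesis
    using dist_limit_map by blast
qed

end
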